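(* Let $N,p,q\in\mathbb{N}$ with $p+q\le N$, let $t=N-p-q$, let $\lambda$ be a partition of length $\le N$, and let $A$ be an $N\times t$ matrix (possibly empty). Let $u=(u_1,\ldots,u_p)$, $v=(v_1,\ldots,v_q)$ be indeterminates (or elements of a field with $u_i\ne v_k$ for all $i,k$). Let $D$ be the determinant of the $N\times N$ matrix whose first $t$ columns are those of $A$, whose column $t+i$ ($1\le i\le p$) is $\operatorname{H}^N_{t+i,\lambda}(u_i,\ldots,u_p,v_1,\ldots,v_q)$, and whose column $t+p+i$ ($1\le i\le q$) is $\operatorname{H}^N_{t+p+i,\lambda}(v_i,\ldots,v_q)$. Let $D'$ be the determinant of the matrix obtained by replacing, for $1\le i\le p$, column $t+i$ by $\operatorname{H}^N_{t+q+i,\lambda}(u_i,\ldots,u_p)$ (other columns unchanged), and let $D''$ be the determinant of the matrix obtained from that one by reversing the order of columns $t+1,\ldots,t+p$. Then \[ D=\frac{D'}{\prod_{i=1}^p\prod_{k=1}^q(u_i-v_k)}=\frac{D''}{(-1)^{p(p-1)/2}\prod_{i=1}^p\prod_{k=1}^q(u_i-v_k)}. \]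
   Context: $\hom_m$ is the complete homogeneous symmetric polynomial of degree $m$ ($\hom_0=1$, $\hom_m=0$ for $m<0$). Partitions are extended by zeros: $\lambda_j=0$ beyond the length. For $s\in\mathbb{N}_0$ and variables $t_1,\ldots,t_m$, $\operatorname{H}^N_{s,\lambda}(t_1,\ldots,t_m)$ denotes the column vector $\bigl[\hom_{s+\lambda_j-j}(t_1,\ldots,t_m)\bigr]_{j=1}^N$. *)

theory Defs
  imports "Jordan_Normal_Form.Determinant"
begin

text \<open>Complete homogeneous symmetric polynomial h_m evaluated at the list of
  field elements ts (sum of all monomials of total degree m in ts);
  h_0 = 1, h_m = 0 for m < 0.  Defined by the standard recursion
  h_m(x, ts) = sum_{j=0..m} x^j h_{m-j}(ts).\<close>
fun hom :: "int \<Rightarrow> 'a::comm_ring_1 list \<Rightarrow> 'a" where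
  "hom m [] = (if m = 0 then 1 else 0)"
| "hom m (x # xs) = (if m < 0 then 0 else (\<Sum>j\<in>{0..nat m}. x ^ j * hom (m - int j) xs))"

text \<open>Entry in row r (0-based; row index j = r+1) of the column vector
  H^N_{s,lambda}(ts), namely h_{s + lambda_j - j}(ts).\<close>
definition Hent :: "nat \<Rightarrow> (nat \<Rightarrow> nat) \<Rightarrow> 'a::comm_ring_1 list \<Rightarrow> nat \<Rightarrow> 'a" where
  "Hent s lam ts r = hom (int s + int (lam (r+1)) - int (r+1)) ts"

text \<open>Partition of length at most N, indexed from 1 (lam 0 is irrelevant).\<close>
definition is_partition_len :: "nat \<Rightarrow> (nat \<Rightarrow> nat) \<Rightarrow> bool" where
  "is_partition_len N lam \<longleftrightarrow> (\<forall>i j. 1 \<le> i \<longrightarrow> i \<le> j \<longrightarrow> lam j \<le> lam i) \<and> (\<forall>j>N. lam j = 0)"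

definition seg :: "(nat \<Rightarrow> 'a) \<Rightarrow> nat \<Rightarrow> nat \<Rightarrow> 'a list" where
  "seg u i p = map u [i..<p+1]"

end

theory Submission
  imports Defs
begin

text \<open>Since h(n+1, a#Y) - h(n+1, b#Y) = (a - b) * h(n, a#b#Y), deleting the variable v(k+1)
  from every u-column amounts to replacing column t+i by (u i - v(k+1)) times itself plus the
  next column (for i = p, the v-column t+p+k), the degrees being raised by one.  This is right
  multiplication by a lower triangular matrix of determinant prod_i (u i - v(k+1)); doing it for
  k = 0, ..., q-1 turns D into D' = D * prod_(i,k) (u i - v k).  Reversing p columns is a product
  of p div 2 transpositions, of sign (-1)^(p(p-1)/2).\<close>

lemma hom_neg: "m < 0 \<Longrightarrow> hom m xs = 0"
  by (cases xs) auto

lemma hom_0: "hom 0 xs = 1"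
  by (induction xs) auto

lemma hom_Cons_rec: "hom m (x # xs) = hom m xs + x * hom (m - 1) (x # xs)"
proof (cases "m < 0")
  case True
  then show ?thesis by (simp add: hom_neg)
next
  case False
  then obtain n where m: "m = int n" by (metis nonneg_eq_int not_less)
  show ?thesis
  proof (cases n)
    case 0
    then show ?thesis using m by (simp add: hom_0)
  next
    case (Suc k)
    define g where "g j = x ^ j * hom (m - int j) xs" for j
    have "nat m = Suc k" "nat (m - 1) = k" "\<not> m - 1 < 0" using m Suc by auto
    with False have rec: "x * hom (m - 1) (x # xs) = (\<Sum>j\<in>{0..k}. g (Suc j))"
      by (simp add: g_def sum_distrib_left algebra_simps)
    have "hom m (x # xs) = (\<Sum>j\<in>{0..nat m}. g j)"
      using False by (simp add: g_def)
    also have "\<dots> = g 0 + (\<Sum>j\<in>{0..k}. g (Suc j))"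
      unfolding \<open>nat m = Suc k\<close> by (simp only: sum.atLeast0_atMost_Suc_shift comp_def)
    also have "g 0 = hom m xs" by (simp add: g_def)
    finally show ?thesis by (simp only: rec)
  qed
qed

lemma sum_triangle_swap:
  "(\<Sum>j\<le>n. \<Sum>l\<le>n - j. f j l) = (\<Sum>l\<le>(n::nat). \<Sum>j\<le>n - l. f j l :: 'a::comm_monoid_add)"
proof -
  have "(\<Sum>j\<le>n. \<Sum>l\<le>n - j. f j l) = (\<Sum>(j, l)\<in>(SIGMA j:{..n}. {..n - j}). f j l)"
    by (rule sum.Sigma) auto
  also have "\<dots> = (\<Sum>(l, j)\<in>(SIGMA l:{..n}. {..n - l}). f j l)"
    by (rule sum.reindex_bij_witness[where i = prod.swap and j = prod.swap]) auto
  also have "\<dots> = (\<Sum>l\<le>n. \<Sum>j\<le>n - l. f j l)"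
    by (rule sum.Sigma[symmetric]) auto
  finally show ?thesis .
qed

lemma hom_Cons_Cons_expand:
  "hom (int n) (a # b # xs) = (\<Sum>j\<le>n. \<Sum>l\<le>n - j. a ^ j * (b ^ l * hom (int (n - j - l)) xs))"
proof -
  have "hom (int n) (a # b # xs) = (\<Sum>j\<le>n. a ^ j * hom (int (n - j)) (b # xs))"
    by (auto simp: atLeast0AtMost of_nat_diff intro!: sum.cong)
  also have "\<dots> = (\<Sum>j\<le>n. \<Sum>l\<le>n - j. a ^ j * (b ^ l * hom (int (n - j - l)) xs))"
    by (auto simp: atLeast0AtMost sum_distrib_left of_nat_diff diff_diff_eq intro!: sum.cong)
  finally show ?thesis .
qed

lemma hom_swap: "hom m (x # y # xs) = hom m (y # x # xs)"
proof (cases "m < 0")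
  case True
  then show ?thesis by (simp add: hom_neg)
next
  case False
  then obtain n where m: "m = int n" by (metis nonneg_eq_int not_less)
  show ?thesis unfolding m hom_Cons_Cons_expand
    by (subst sum_triangle_swap) (auto intro!: sum.cong simp: algebra_simps diff_commute)
qed

lemma hom_append_Cons: "hom m (xs @ y # ys) = hom m (y # xs @ ys)"
proof (induction xs arbitrary: m)
  case Nil
  then show ?case by simp
next
  case (Cons x xs)
  have "hom m (x # xs @ y # ys) = hom m (x # y # xs @ ys)"
    using Cons by (cases "m < 0") (simp_all add: hom_neg)
  also have "\<dots> = hom m (y # x # xs @ ys)" by (rule hom_swap)
  finally show ?case by simp
qed

lemma hom_mset_cong: "mset xs = mset ys \<Longrightarrow> hom m xs = hom m ys"
proof (induction xs arbitrary: ys m)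
  case Nil
  then show ?case by simp
next
  case (Cons x xs)
  then have "x \<in> set ys" by (metis list.set_intros(1) set_mset_mset)
  then obtain ys1 ys2 where ys: "ys = ys1 @ x # ys2" by (meson split_list)
  then have "hom k xs = hom k (ys1 @ ys2)" for k
    using Cons by simp
  then have "hom m (x # xs) = hom m (x # ys1 @ ys2)"
    by (cases "m < 0") (simp_all add: hom_neg)
  then show ?case by (simp add: ys hom_append_Cons)
qed

lemma hom_divided_difference:
  "hom (n + 1) (a # xs) - hom (n + 1) (b # xs) = (a - b) * hom n (a # b # xs)"
  using hom_Cons_rec[of "n + 1" a "b # xs"] hom_Cons_rec[of "n + 1" b "a # xs"]
    hom_swap[of "n + 1" a b xs] hom_swap[of n a b xs]
  by (simp add: algebra_simps)

lemma hom_exchange: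
  "hom (n + 1) (a # U @ V) = (a - b) * hom n (a # U @ b # V) + hom (n + 1) (U @ b # V)"
proof -
  have "hom m (b # U @ V) = hom m (U @ b # V)"
    and "hom m (a # b # U @ V) = hom m (a # U @ b # V)" for m
    by (rule hom_mset_cong, simp)+
  then show ?thesis
    using hom_divided_difference[of n a "U @ V" b] by (simp del: hom.simps add: algebra_simps)
qed

lemma seg_Cons: "i \<le> p \<Longrightarrow> seg u i p = u i # seg u (Suc i) p"
  unfolding seg_def using upt_conv_Cons[of i "p + 1"] by simp

lemma seg_empty: "p < i \<Longrightarrow> seg u i p = []"
  unfolding seg_def by simp

lemma Hent_seg_recurrence:
  assumes "i \<le> p" "k < q"
  shows "Hent (Suc s) lam (seg u i p @ seg v (k + 2) q) r
    = (u i - v (k + 1)) * Hent s lam (seg u i p @ seg v (k + 1) q) r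
      + Hent (Suc s) lam (seg u (Suc i) p @ seg v (k + 1) q) r"
proof -
  have "seg v (k + 1) q = v (k + 1) # seg v (k + 2) q"
    using seg_Cons[of "k + 1" q v] assms(2) by simp
  moreover have "int (Suc s) + int (lam (r + 1)) - int (r + 1)
    = (int s + int (lam (r + 1)) - int (r + 1)) + 1"
    by simp
  ultimately show ?thesis
    unfolding Hent_def seg_Cons[OF assms(1)] append_Cons by (simp only: hom_exchange)
qed

definition col_comb_mat ::
    "nat \<Rightarrow> (nat \<Rightarrow> 'a::comm_ring_1) \<Rightarrow> (nat \<Rightarrow> nat option) \<Rightarrow> 'a mat"
  where "col_comb_mat n d nx =
    mat n n (\<lambda>(r, c). (if r = c then d c else 0) + (if nx c = Some r then 1 else 0))"

lemma col_comb_mat_carrier: "col_comb_mat n d nx \<in> carrier_mat n n"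
  by (simp add: col_comb_mat_def)

lemma index_mult_col_comb_mat:
  assumes "X \<in> carrier_mat m n" "i < m" "c < n"
    and "\<And>c'. nx c = Some c' \<Longrightarrow> c' < n \<and> c' \<noteq> c"
  shows "(X * col_comb_mat n d nx) $$ (i, c)
    = d c * X $$ (i, c) + (case nx c of None \<Rightarrow> 0 | Some c' \<Rightarrow> X $$ (i, c'))"
proof -
  have "(X * col_comb_mat n d nx) $$ (i, c)
    = (\<Sum>j\<in>{0..<n}. (if j = c then d c * X $$ (i, c) else 0)
        + (if nx c = Some j then X $$ (i, j) else 0))"
    using assms by (auto simp: col_comb_mat_def scalar_prod_def intro!: sum.cong)
  then show ?thesis
    using assms by (cases "nx c") (auto simp: sum.distrib)
qed

lemma det_col_comb_mat:
  assumes "\<And>c c'. nx c = Some c' \<Longrightarrow> c < c'"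
  shows "det (col_comb_mat n d nx) = (\<Prod>c<n. d c)"
proof -
  have "det (col_comb_mat n d nx) = prod_list (diag_mat (col_comb_mat n d nx))"
    using assms by (intro det_lower_triangular[of n] col_comb_mat_carrier)
      (force simp: col_comb_mat_def)
  also have "diag_mat (col_comb_mat n d nx) = map d [0..<n]"
    using assms by (auto simp: diag_mat_def col_comb_mat_def intro!: map_cong)
  finally show ?thesis
    by (simp add: prod.distinct_set_conv_list[symmetric] lessThan_atLeast0)
qed

lemma prod_block:
  fixes t p n :: nat
  assumes "t + p \<le> n"
  shows "(\<Prod>c<n. if t \<le> c \<and> c < t + p then f (c + 1 - t) else 1) = (\<Prod>i\<in>{1..p}. f i)"
proof -
  have "(\<Prod>c<n. if t \<le> c \<and> c < t + p then f (c + 1 - t) else 1)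
    = (\<Prod>c\<in>{c \<in> {..<n}. t \<le> c \<and> c < t + p}. f (c + 1 - t))"
    by (rule prod.inter_filter[symmetric]) simp
  also have "{c \<in> {..<n}. t \<le> c \<and> c < t + p} = {t..<t + p}"
    using assms by auto
  also have "(\<Prod>c\<in>{t..<t + p}. f (c + 1 - t)) = (\<Prod>i\<in>{1..p}. f i)"
    by (rule prod.reindex_bij_witness[where i = "\<lambda>i. i + t - 1" and j = "\<lambda>c. c + 1 - t"]) auto
  finally show ?thesis .
qed

text \<open>Stages \<open>k = 0\<close> and \<open>k = q\<close> are the matrices of \<open>D\<close> and \<open>D'\<close>.\<close>

definition shifted_H_mat :: "nat \<Rightarrow> nat \<Rightarrow> nat \<Rightarrow> nat \<Rightarrow> 'a::field mat \<Rightarrow> (nat \<Rightarrow> nat) \<Rightarrow>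
    (nat \<Rightarrow> 'a) \<Rightarrow> (nat \<Rightarrow> 'a) \<Rightarrow> nat \<Rightarrow> 'a mat"
  where "shifted_H_mat N t p q A lam u v k = mat N N (\<lambda>(r, c).
      if c < t then A $$ (r, c)
      else if c < t + p then Hent (k + c + 1) lam (seg u (c + 1 - t) p @ seg v (k + 1) q) r
      else Hent (c + 1) lam (seg v (c + 1 - t - p) q) r)"

lemma shifted_H_mat_carrier: "shifted_H_mat N t p q A lam u v k \<in> carrier_mat N N"
  by (simp add: shifted_H_mat_def)

lemma shifted_H_mat_Suc:
  assumes N: "N = t + p + q" and k: "k < q"
  shows "shifted_H_mat N t p q A lam u v (Suc k) = shifted_H_mat N t p q A lam u v k
    * col_comb_mat N (\<lambda>c. if t \<le> c \<and> c < t + p then u (c + 1 - t) - v (k + 1) else 1)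
        (\<lambda>c. if t \<le> c \<and> c < t + p then Some (if c + 1 < t + p then c + 1 else t + p + k) else None)"
    (is "?M (Suc k) = ?M k * col_comb_mat N ?d ?nx")
proof (rule eq_matI)
  fix r c
  assume "r < dim_row (?M k * col_comb_mat N ?d ?nx)" "c < dim_col (?M k * col_comb_mat N ?d ?nx)"
  then have r: "r < N" and c: "c < N"
    by (simp_all add: shifted_H_mat_def col_comb_mat_def)
  have "(?M k * col_comb_mat N ?d ?nx) $$ (r, c)
    = ?d c * ?M k $$ (r, c) + (case ?nx c of None \<Rightarrow> 0 | Some c' \<Rightarrow> ?M k $$ (r, c'))"
    using N k r c by (intro index_mult_col_comb_mat[OF shifted_H_mat_carrier]) (auto split: if_splits)
  also have "\<dots> = ?M (Suc k) $$ (r, c)"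
  proof (cases "t \<le> c \<and> c < t + p")
    case False
    then show ?thesis using r c by (auto simp: shifted_H_mat_def)
  next
    case block: True
    define i where "i = c + 1 - t"
    have i: "i \<le> p" and d: "?d c = u i - v (k + 1)"
      using block by (auto simp: i_def)
    obtain c' where c': "?nx c = Some c'" using block by simp
    have cur: "?M k $$ (r, c) = Hent (k + c + 1) lam (seg u i p @ seg v (k + 1) q) r"
      and new: "?M (Suc k) $$ (r, c) = Hent (Suc (k + c + 1)) lam (seg u i p @ seg v (k + 2) q) r"
      using r c block by (simp_all add: shifted_H_mat_def i_def)
    have next_col: "?M k $$ (r, c') = Hent (Suc (k + c + 1)) lam (seg u (Suc i) p @ seg v (k + 1) q) r"
    proof (cases "c + 1 < t + p")
      case True
      then show ?thesis
        using r block c' N by (auto simp: shifted_H_mat_def i_def Suc_diff_le)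
    next
      case False
      then have "i = p" using block by (auto simp: i_def)
      then show ?thesis using r N k block False c'
        by (auto simp: shifted_H_mat_def seg_empty intro!: arg_cong[where f = "\<lambda>s. Hent s lam _ r"])
    qed
    show ?thesis
      unfolding new Hent_seg_recurrence[OF i k] using c' cur next_col d by simp
  qed
  finally show "?M (Suc k) $$ (r, c) = (?M k * col_comb_mat N ?d ?nx) $$ (r, c)" ..
qed (simp_all add: shifted_H_mat_def col_comb_mat_def)

lemma det_shifted_H_mat:
  assumes N: "N = t + p + q" and "k \<le> q"
  shows "det (shifted_H_mat N t p q A lam u v k)
    = det (shifted_H_mat N t p q A lam u v 0) * (\<Prod>j\<in>{1..k}. \<Prod>i\<in>{1..p}. u i - v j)"
  using \<open>k \<le> q\<close>
proof (induction k)
  case 0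
  then show ?case by simp
next
  case (Suc k)
  have "det (shifted_H_mat N t p q A lam u v (Suc k))
    = det (shifted_H_mat N t p q A lam u v k) * (\<Prod>c<N. if t \<le> c \<and> c < t + p then u (c + 1 - t) - v (k + 1) else 1)"
    using Suc.prems unfolding shifted_H_mat_Suc[OF N Suc_le_lessD[OF Suc.prems]]
    by (subst det_mult[OF shifted_H_mat_carrier col_comb_mat_carrier])
      (auto intro!: arg_cong[where f = "(*) _"] det_col_comb_mat split: if_splits)
  also have "(\<Prod>c<N. if t \<le> c \<and> c < t + p then u (c + 1 - t) - v (k + 1) else 1)
    = (\<Prod>i\<in>{1..p}. u i - v (Suc k))"
    using prod_block[of t p N "\<lambda>i. u i - v (k + 1)"] N by simp
  finally show ?case using Suc by (simp add: prod.nat_ivl_Suc' mult.assoc)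
qed

definition rev_cols_mat :: "nat \<Rightarrow> nat \<Rightarrow> 'a mat \<Rightarrow> 'a mat" where
  "rev_cols_mat a m X = mat (dim_row X) (dim_col X) (\<lambda>(r, c).
     if a \<le> c \<and> c < a + m then X $$ (r, 2 * a + m - 1 - c) else X $$ (r, c))"

lemma det_rev_cols_mat:
  fixes X :: "'a::comm_ring_1 mat"
  assumes "X \<in> carrier_mat n n" "a + m \<le> n"
  shows "det (rev_cols_mat a m X) = (-1) ^ (m * (m - 1) div 2) * det X"
  using assms
proof (induction m arbitrary: a X rule: less_induct)
  case (less m)
  show ?case
  proof (cases "m < 2")
    case True
    then have "2 * a + m - 1 - c = c" if "a \<le> c" "c < a + m" for c
      using that by auto
    then have "rev_cols_mat a m X = X"
      using less.prems by (intro eq_matI) (auto simp: rev_cols_mat_def)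
    then show ?thesis using True by (cases m) auto
  next
    case False
    then obtain j where m: "m = j + 2" by (metis add.commute le_Suc_ex not_less)
    let ?Y = "swapcols a (a + m - 1) X"
    have "rev_cols_mat a m X = rev_cols_mat (a + 1) j ?Y"
      using less.prems m by (intro eq_matI) (auto simp: rev_cols_mat_def)
    then have "det (rev_cols_mat a m X) = (-1) ^ (j * (j - 1) div 2) * det ?Y"
      using less.IH[of j ?Y "a + 1"] less.prems m by simp
    also have "det ?Y = - det X"
      using less.prems m by (intro det_swapcols) auto
    also have "m * (m - 1) div 2 = j * (j - 1) div 2 + 2 * j + 1"
      by (cases j) (auto simp: m algebra_simps)
    then have "(-1::'a) ^ (j * (j - 1) div 2) * - det X = (-1) ^ (m * (m - 1) div 2) * det X"
      by (simp add: power_add)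
    finally show ?thesis .
  qed
qed

theorem lemma7p1:
  fixes N p q t :: nat and lam :: "nat \<Rightarrow> nat" and A :: "'a::field mat"
    and u v :: "nat \<Rightarrow> 'a"
  assumes "p + q \<le> N" and "t = N - p - q"
    and "is_partition_len N lam"
    and "A \<in> carrier_mat N t"
    and "\<forall>i\<in>{1..p}. \<forall>k\<in>{1..q}. u i \<noteq> v k"
  defines "M \<equiv> mat N N (\<lambda>(r, c).
      if c < t then A $$ (r, c)
      else if c < t + p then Hent (c + 1) lam (seg u (c + 1 - t) p @ seg v 1 q) r
      else Hent (c + 1) lam (seg v (c + 1 - t - p) q) r)"
    and "M' \<equiv> mat N N (\<lambda>(r, c).
      if c < t then A $$ (r, c)
      else if c < t + p then Hent (q + c + 1) lam (seg u (c + 1 - t) p) r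
      else Hent (c + 1) lam (seg v (c + 1 - t - p) q) r)"
    and "M'' \<equiv> mat N N (\<lambda>(r, c).
      if c < t then A $$ (r, c)
      else if c < t + p then
        Hent (q + (2 * t + p - 1 - c) + 1) lam (seg u ((2 * t + p - 1 - c) + 1 - t) p) r
      else Hent (c + 1) lam (seg v (c + 1 - t - p) q) r)"
    and "P \<equiv> (\<Prod>i\<in>{1..p}. \<Prod>k\<in>{1..q}. u i - v k)"
  shows "det M = det M' / P \<and> det M = det M'' / ((-1) ^ (p * (p - 1) div 2) * P)"
proof -
  have N: "N = t + p + q" using assms(1,2) by simp
  have M: "M = shifted_H_mat N t p q A lam u v 0"
    unfolding M_def shifted_H_mat_def add_0 ..
  have no_v: "seg v (q + 1) q = []" by (simp add: seg_empty)
  have M': "M' = shifted_H_mat N t p q A lam u v q"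
    unfolding M'_def shifted_H_mat_def no_v append_Nil2 ..
  have M'': "M'' = rev_cols_mat t p M'"
    using N by (intro eq_matI) (auto simp: M''_def M'_def rev_cols_mat_def)
  have "det M' = det M * P"
    unfolding M M' P_def prod.swap[where A = "{1..p}"] by (rule det_shifted_H_mat[OF N order_refl])
  moreover have "det M'' = (-1) ^ (p * (p - 1) div 2) * det M'"
    unfolding M'' using N by (intro det_rev_cols_mat[of _ N]) (simp_all add: M'_def)
  moreover have "P \<noteq> 0"
    unfolding P_def using assms(5) by simp
  ultimately show ?thesis by simp
qed

end
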